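(* Let $G=(V,E)$ be a control flow graph, let $p$ be a predicate node with successors $s_1,s_2$ in $G$ and with at least two successors in $A_p$. Assume $V_1\cap V_2=\emptyset$ and let $U=V_p\setminus(V_1\cup V_2)$. Then there exist nodes $a,b$ that are DOD on $p$ if and only if the cycle $C$ of $A_p$ has an unfolding belonging to the language $V_1.U^*.(V_2.U^* )^*.V_2.U^*.(V_1.U^* )^*$.
   Context: A control flow graph (CFG) is a finite directed graph $G=(V,E)$ in which every node has at most two outgoing edges; nodes with exactly two outgoing edges are predicate nodes. A path from $n_1$ is a nonempty finite or infinite sequence of nodes with each adjacent pair an edge; it is maximal if it is infinite or its last node has no successor. $V_p$ is the set of nodes occurring on all maximal paths from $p$ in $G$. For $V'\subseteq V$, a $V'$-interval from $x$ to $y$ is a finite path $n_1\ldots n_k$ in $G$ with $k\ge 2$, $n_1=x\in V'$, $n_k=y\in V'$, and $n_i\notin V'$ for $1<i<k$. $A_p$ is the directed graph with node set $V_p$ and an edge $(x,y)$ iff there is a $V_p$-interval from $x$ to $y$ in $G$. The cycle $C$ of $A_p$ is the subgraph of $A_p$ induced by $V_p\setminus\{p\}$; an unfolding of $C$ is a path in $C$ containing each node of $C$ exactly once, viewed as a word over the alphabet $V_p$. For $i\in\{1,2\}$, $V_i$ is the set of nodes $n\in V_p$ such that there is a finite path in $G$ from $s_i$ to $n$ whose nodes other than the last one all lie outside $V_p$ (possibly $n=s_i$). For three distinct nodes $p,a,b$ with $p$ a predicate node with successors $s_1,s_2$, the nodes $a,b$ are DOD on $p$ if all maximal paths from $p$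 contain both $a$ and $b$, all maximal paths from $s_1$ contain $a$ before any occurrence of $b$, and all maximal paths from $s_2$ contain $b$ before any occurrence of $a$. Concatenation and Kleene star of sets of nodes are the usual regular-language operations. *)

theory Defs
  imports Main
begin

definition cfg :: "'a set \<Rightarrow> ('a \<times> 'a) set \<Rightarrow> bool" where
  "cfg V E \<longleftrightarrow> finite V \<and> E \<subseteq> V \<times> V \<and> (\<forall>x\<in>V. card (E `` {x}) \<le> 2)"

definition fpath :: "'a set \<Rightarrow> ('a \<times> 'a) set \<Rightarrow> 'a list \<Rightarrow> bool" where
  "fpath V E xs \<longleftrightarrow> xs \<noteq> [] \<and> set xs \<subseteq> V \<and>
     (\<forall>i. Suc i < length xs \<longrightarrow> (xs ! i, xs ! Suc i) \<in> E)"

definition ipath :: "'a set \<Rightarrow> ('a \<times> 'a) set \<Rightarrow> (nat \<Rightarrow> 'a) \<Rightarrow> bool" where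
  "ipath V E f \<longleftrightarrow> (\<forall>i. f i \<in> V \<and> (f i, f (Suc i)) \<in> E)"

text \<open>A maximal finite path ends in a node without successor; infinite paths are maximal.\<close>

definition maxfpath :: "'a set \<Rightarrow> ('a \<times> 'a) set \<Rightarrow> 'a list \<Rightarrow> bool" where
  "maxfpath V E xs \<longleftrightarrow> fpath V E xs \<and> E `` {last xs} = {}"

definition on_all_max_paths :: "'a set \<Rightarrow> ('a \<times> 'a) set \<Rightarrow> 'a \<Rightarrow> 'a \<Rightarrow> bool" where
  "on_all_max_paths V E x n \<longleftrightarrow>
     (\<forall>xs. maxfpath V E xs \<and> hd xs = x \<longrightarrow> n \<in> set xs) \<and>
     (\<forall>f. ipath V E f \<and> f 0 = x \<longrightarrow> n \<in> range f)"

definition Vp :: "'a set \<Rightarrow> ('a \<times> 'a) set \<Rightarrow> 'a \<Rightarrow> 'a set" where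
  "Vp V E p = {n \<in> V. on_all_max_paths V E p n}"

definition interval :: "'a set \<Rightarrow> ('a \<times> 'a) set \<Rightarrow> 'a set \<Rightarrow> 'a \<Rightarrow> 'a \<Rightarrow> bool" where
  "interval V E V' x y \<longleftrightarrow> (\<exists>xs. fpath V E xs \<and> length xs \<ge> 2 \<and> hd xs = x \<and> last xs = y \<and>
      x \<in> V' \<and> y \<in> V' \<and> (\<forall>i. 0 < i \<and> i < length xs - 1 \<longrightarrow> xs ! i \<notin> V'))"

definition Ap_edges :: "'a set \<Rightarrow> ('a \<times> 'a) set \<Rightarrow> 'a \<Rightarrow> ('a \<times> 'a) set" where
  "Ap_edges V E p = {(x, y). x \<in> Vp V E p \<and> y \<in> Vp V E p \<and> interval V E (Vp V E p) x y}"

text \<open>An unfolding of the cycle C (subgraph of A_p induced by Vp - {p}).\<close>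

definition is_unfolding :: "'a set \<Rightarrow> ('a \<times> 'a) set \<Rightarrow> 'a \<Rightarrow> 'a list \<Rightarrow> bool" where
  "is_unfolding V E p w \<longleftrightarrow> w \<noteq> [] \<and> distinct w \<and> set w = Vp V E p - {p} \<and>
     (\<forall>i. Suc i < length w \<longrightarrow> (w ! i, w ! Suc i) \<in> Ap_edges V E p)"

definition Vsucc :: "'a set \<Rightarrow> ('a \<times> 'a) set \<Rightarrow> 'a \<Rightarrow> 'a \<Rightarrow> 'a set" where
  "Vsucc V E p s = {n \<in> Vp V E p. \<exists>xs. fpath V E xs \<and> hd xs = s \<and> last xs = n \<and>
      (\<forall>i. i < length xs - 1 \<longrightarrow> xs ! i \<notin> Vp V E p)}"

definition DOD :: "'a set \<Rightarrow> ('a \<times> 'a) set \<Rightarrow> 'a \<Rightarrow> 'a \<Rightarrow> 'a \<Rightarrow> 'a \<Rightarrow> 'a \<Rightarrow> bool" where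
  "DOD V E p s1 s2 a b \<longleftrightarrow> distinct [p, a, b] \<and>
     on_all_max_paths V E p a \<and> on_all_max_paths V E p b \<and>
     (\<forall>xs. maxfpath V E xs \<and> hd xs = s1 \<longrightarrow>
        (\<exists>i < length xs. xs ! i = a \<and> (\<forall>j < i. xs ! j \<noteq> b))) \<and>
     (\<forall>f. ipath V E f \<and> f 0 = s1 \<longrightarrow> (\<exists>i. f i = a \<and> (\<forall>j < i. f j \<noteq> b))) \<and>
     (\<forall>xs. maxfpath V E xs \<and> hd xs = s2 \<longrightarrow>
        (\<exists>i < length xs. xs ! i = b \<and> (\<forall>j < i. xs ! j \<noteq> a))) \<and>
     (\<forall>f. ipath V E f \<and> f 0 = s2 \<longrightarrow> (\<exists>i. f i = b \<and> (\<forall>j < i. f j \<noteq> a)))"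

definition letters :: "'a set \<Rightarrow> 'a list set" where
  "letters S = {[x] | x. x \<in> S}"

definition lconc :: "'a list set \<Rightarrow> 'a list set \<Rightarrow> 'a list set" (infixr "\<cdot>\<cdot>" 75) where
  "lconc L M = {xs @ ys | xs ys. xs \<in> L \<and> ys \<in> M}"

inductive_set lstar :: "'a list set \<Rightarrow> 'a list set" for L :: "'a list set" where
  lstar_Nil: "[] \<in> lstar L"
| lstar_app: "xs \<in> L \<Longrightarrow> ys \<in> lstar L \<Longrightarrow> xs @ ys \<in> lstar L"

end

theory Submission
  imports Defs "HOL-Combinatorics.Orbits"
begin

text \<open>Maximal paths are represented as runs: infinite node sequences that follow edges and stay
  at a sink forever once they reach one. Every run from \<open>p\<close> meets all of \<open>V\<^sub>p\<close>, in particular the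
  (at least two) entries of \<open>V\<^sub>p\<close> that are \<open>A\<^sub>p\<close>-successors of \<open>p\<close>. Hence a run from one entry
  reaches another one, runs from entries meet the entries infinitely often, and every run starting
  in \<open>C = V\<^sub>p - {p}\<close> covers \<open>C\<close>. If a node \<open>z\<close> of \<open>V\<^sub>p\<close> had intervals to two different nodes of
  \<open>C\<close>, one of which leads back to \<open>z\<close>, then cutting the way back after its last visit to either
  target would give a cycle through \<open>z\<close> missing one of them, contradicting coverage. So \<open>A\<^sub>p\<close>
  has no edge from \<open>C\<close> back to \<open>p\<close> and is functional on \<open>C\<close>, i.e. it is a single cycle there,
  and every run from \<open>v \<in> C\<close> meets the nodes of \<open>C\<close> in cycle order. Thus \<open>a\<close> comes before \<open>b\<close>
  on all runs from \<open>s\<^sub>i\<close> iff every node of \<open>V\<^sub>i\<close> is closer to \<open>a\<close> than to \<open>b\<close> along the cycle.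
  Reading the cycle from the node of \<open>V\<^sub>1\<close> closest to \<open>a\<close>, the DOD conditions say exactly that
  no node of \<open>V\<^sub>1\<close> is followed by a node of \<open>V\<^sub>2\<close> later on, which is the shape
  \<open>V\<^sub>1 (V\<^sub>2 | U)\<^sup>* V\<^sub>2 (V\<^sub>1 | U)\<^sup>*\<close> of the regular expression.\<close>

section \<open>Paths and runs\<close>

lemma fpath_nth_in_V: "fpath V E xs \<Longrightarrow> i < length xs \<Longrightarrow> xs ! i \<in> V"
  unfolding fpath_def by auto

lemma fpath_conv_successively:
  "fpath V E xs \<longleftrightarrow> xs \<noteq> [] \<and> set xs \<subseteq> V \<and> successively (\<lambda>x y. (x, y) \<in> E) xs"
  unfolding fpath_def successively_conv_nth by blast

lemma fpath_join:
  assumes "fpath V E xs" "fpath V E ys" "last xs = hd ys"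
  shows "fpath V E (xs @ tl ys)" "hd (xs @ tl ys) = hd xs" "last (xs @ tl ys) = last ys"
    "set (xs @ tl ys) = set xs \<union> set ys"
proof -
  have ne: "xs \<noteq> []" "ys \<noteq> []" using assms unfolding fpath_def by auto
  then have ys: "ys = last xs # tl ys" using assms(3) by simp
  show "set (xs @ tl ys) = set xs \<union> set ys"
    using ne by (subst (2) ys) auto
  have "successively (\<lambda>x y. (x, y) \<in> E) xs" "successively (\<lambda>x y. (x, y) \<in> E) (last xs # tl ys)"
    using assms(1,2) ys unfolding fpath_conv_successively by auto
  then have "successively (\<lambda>x y. (x, y) \<in> E) (xs @ tl ys)"
    by (auto simp: successively_append_iff successively_Cons)
  then show "fpath V E (xs @ tl ys)"
    using assms(1,2) ne \<open>set (xs @ tl ys) = set xs \<union> set ys\<close> unfolding fpath_conv_successively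
    by simp
  show "hd (xs @ tl ys) = hd xs" using ne by simp
  show "last (xs @ tl ys) = last ys"
    using ne ys by (metis last_append last_ConsL last_tl)
qed

lemma fpath_drop:
  assumes "fpath V E xs" "k < length xs"
  shows "fpath V E (drop k xs)"
  using assms set_drop_subset[of k xs] unfolding fpath_def by fastforce

lemma maxfpath_not_Nil: "maxfpath V E xs \<Longrightarrow> xs \<noteq> []"
  by (simp add: maxfpath_def fpath_def)

definition run :: "'a set \<Rightarrow> ('a \<times> 'a) set \<Rightarrow> (nat \<Rightarrow> 'a) \<Rightarrow> bool" where
  "run V E f \<longleftrightarrow> (\<forall>i. f i \<in> V \<and> ((f i, f (Suc i)) \<in> E \<or> (E `` {f i} = {} \<and> f (Suc i) = f i)))"

lemma run_in_V: "run V E f \<Longrightarrow> f i \<in> V"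
  by (simp add: run_def)

lemma run_edge: "run V E f \<Longrightarrow> E `` {f i} \<noteq> {} \<Longrightarrow> (f i, f (Suc i)) \<in> E"
  unfolding run_def by metis

lemma run_shift: "run V E f \<Longrightarrow> run V E (\<lambda>i. f (i + k))"
  by (simp add: run_def)

lemma run_stays_at_sink:
  assumes "run V E f" "E `` {f j} = {}" "j \<le> k"
  shows "f k = f j"
  using assms(3)
proof (induction k rule: dec_induct)
  case (step k)
  then show ?case using assms(1,2) unfolding run_def by (metis Image_singleton_iff empty_iff)
qed simp

lemma ipath_imp_run: "ipath V E f \<Longrightarrow> run V E f"
  by (simp add: ipath_def run_def)

lemma run_exists:
  assumes "E \<subseteq> V \<times> V" "x \<in> V"
  shows "\<exists>f. run V E f \<and> f 0 = x"
proof -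
  have "\<exists>f. \<forall>i. (f i \<in> V \<and> (i = 0 \<longrightarrow> f i = x)) \<and>
      ((f i, f (Suc i)) \<in> E \<or> (E `` {f i} = {} \<and> f (Suc i) = f i))"
    using assms by (intro dependent_nat_choice) auto
  then show ?thesis unfolding run_def by blast
qed

lemma run_prefix_fpath:
  assumes "run V E f" "\<And>j. j < t \<Longrightarrow> E `` {f j} \<noteq> {}"
  shows "fpath V E (map f [0..<Suc t])"
  using assms run_edge[OF assms(1)] run_in_V[OF assms(1)]
  by (auto simp: fpath_def nth_append simp del: upt_Suc)

lemma run_prefix_fpath_first_visit:
  assumes "run V E f" "\<And>j. j < t \<Longrightarrow> f j \<noteq> f t"
  shows "fpath V E (map f [0..<Suc t])"
proof (rule run_prefix_fpath[OF assms(1)])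
  fix j assume "j < t"
  then show "E `` {f j} \<noteq> {}"
    using run_stays_at_sink[OF assms(1), of j t] assms(2) by fastforce
qed

lemma run_reaches_fpath:
  assumes "run V E f" "y \<in> range f"
  shows "\<exists>\<pi>. fpath V E \<pi> \<and> hd \<pi> = f 0 \<and> last \<pi> = y"
proof -
  obtain t0 where "f t0 = y" using assms(2) by blast
  define t where "t = (LEAST t. f t = y)"
  have ft: "f t = y"
    unfolding t_def using \<open>f t0 = y\<close> by (rule LeastI)
  have "f j \<noteq> f t" if "j < t" for j
    using not_less_Least[OF that[unfolded t_def]] ft by simp
  then have "fpath V E (map f [0..<Suc t])"
    by (rule run_prefix_fpath_first_visit[OF assms(1)])
  moreover have "hd (map f [0..<Suc t]) = f 0"
    by (simp add: upt_conv_Cons del: upt_Suc)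
  moreover have "last (map f [0..<Suc t]) = y"
    using ft by simp
  ultimately show ?thesis by blast
qed

definition padded :: "'a list \<Rightarrow> nat \<Rightarrow> 'a" where
  "padded xs i = xs ! min i (length xs - 1)"

lemma padded_nth: "i < length xs \<Longrightarrow> padded xs i = xs ! i"
  by (simp add: padded_def)

lemma padded_0: "xs \<noteq> [] \<Longrightarrow> padded xs 0 = hd xs"
  by (simp add: padded_def hd_conv_nth)

lemma range_padded:
  assumes "xs \<noteq> []"
  shows "range (padded xs) = set xs"
proof
  have "min i (length xs - 1) < length xs" for i
    using assms by (simp add: min.strict_coboundedI2)
  then show "range (padded xs) \<subseteq> set xs"
    by (auto simp: padded_def)
  show "set xs \<subseteq> range (padded xs)"
    by (auto simp: in_set_conv_nth padded_nth[symmetric])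
qed

lemma maxfpath_padded_run:
  assumes "maxfpath V E xs"
  shows "run V E (padded xs)"
  unfolding run_def
proof
  fix i
  have ne: "xs \<noteq> []" and fp: "fpath V E xs" and sink: "E `` {last xs} = {}"
    using assms unfolding maxfpath_def fpath_def by auto
  show "padded xs i \<in> V \<and> ((padded xs i, padded xs (Suc i)) \<in> E \<or>
      (E `` {padded xs i} = {} \<and> padded xs (Suc i) = padded xs i))"
  proof (cases "Suc i < length xs")
    case True
    then show ?thesis using fp unfolding fpath_def padded_def by auto
  next
    case False
    then have "min i (length xs - 1) = length xs - 1" "min (Suc i) (length xs - 1) = length xs - 1"
      by auto
    then show ?thesis
      using sink ne fp fpath_nth_in_V[of V E xs "length xs - 1"] by (simp add: padded_def last_conv_nth)
  qed
qed

lemma run_cases: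
  assumes "run V E f"
  shows "ipath V E f \<or> (\<exists>xs. maxfpath V E xs \<and> f = padded xs)"
proof (cases "\<exists>j. E `` {f j} = {}")
  case False
  then show ?thesis using assms unfolding ipath_def run_def by blast
next
  case True
  define t where "t = (LEAST j. E `` {f j} = {})"
  have sink: "E `` {f t} = {}"
    unfolding t_def using True by (rule LeastI_ex)
  have "E `` {f j} \<noteq> {}" if "j < t" for j
    using not_less_Least[OF that[unfolded t_def]] by blast
  then have "maxfpath V E (map f [0..<Suc t])"
    using run_prefix_fpath[OF assms] sink unfolding maxfpath_def by simp
  moreover have "f = padded (map f [0..<Suc t])"
  proof
    fix i
    show "f i = padded (map f [0..<Suc t]) i"
      using run_stays_at_sink[OF assms sink, of i]
      by (cases "i \<le> t") (auto simp: padded_def min_def simp del: upt_Suc)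
  qed
  ultimately show ?thesis by blast
qed

lemma all_runs_iff:
  assumes "\<And>xs. maxfpath V E xs \<Longrightarrow> P (padded xs) \<longleftrightarrow> Q xs"
  shows "(\<forall>f. run V E f \<and> f 0 = x \<longrightarrow> P f) \<longleftrightarrow>
    (\<forall>xs. maxfpath V E xs \<and> hd xs = x \<longrightarrow> Q xs) \<and> (\<forall>f. ipath V E f \<and> f 0 = x \<longrightarrow> P f)"
proof -
  have "padded xs 0 = hd xs" if "maxfpath V E xs" for xs
    using that padded_0 maxfpath_not_Nil by blast
  then show ?thesis using assms run_cases ipath_imp_run maxfpath_padded_run by metis
qed

lemma on_all_max_paths_iff_runs:
  "on_all_max_paths V E x n \<longleftrightarrow> (\<forall>f. run V E f \<and> f 0 = x \<longrightarrow> n \<in> range f)"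
  unfolding on_all_max_paths_def
  by (rule all_runs_iff[where P = "\<lambda>f. n \<in> range f", symmetric])
    (simp add: range_padded maxfpath_not_Nil)

definition occurs_before :: "(nat \<Rightarrow> 'a) \<Rightarrow> 'a \<Rightarrow> 'a \<Rightarrow> bool" where
  "occurs_before f a b \<longleftrightarrow> (\<exists>i. f i = a \<and> (\<forall>j<i. f j \<noteq> b))"

lemma occurs_before_padded:
  assumes "xs \<noteq> []"
  shows "occurs_before (padded xs) a b \<longleftrightarrow> (\<exists>i<length xs. xs ! i = a \<and> (\<forall>j<i. xs ! j \<noteq> b))"
  unfolding occurs_before_def
proof
  assume "\<exists>i. padded xs i = a \<and> (\<forall>j<i. padded xs j \<noteq> b)"
  then obtain i where i: "padded xs i = a" "\<forall>j<i. padded xs j \<noteq> b" by blast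
  define i' where "i' = min i (length xs - 1)"
  have "i' < length xs" "xs ! i' = a"
    using assms i(1) by (auto simp: i'_def padded_def min.strict_coboundedI2)
  moreover have "xs ! j \<noteq> b" if "j < i'" for j
  proof -
    have "j < i" "j < length xs" using that \<open>i' < length xs\<close> unfolding i'_def by auto
    then show ?thesis using i(2) padded_nth by metis
  qed
  ultimately show "\<exists>i<length xs. xs ! i = a \<and> (\<forall>j<i. xs ! j \<noteq> b)" by blast
next
  assume "\<exists>i<length xs. xs ! i = a \<and> (\<forall>j<i. xs ! j \<noteq> b)"
  then show "\<exists>i. padded xs i = a \<and> (\<forall>j<i. padded xs j \<noteq> b)"
    by (metis order.strict_trans padded_nth)
qed

lemma occurs_before_on_all_max_paths_iff_runs:
  "(\<forall>xs. maxfpath V E xs \<and> hd xs = x \<longrightarrow> (\<exists>i<length xs. xs ! i = a \<and> (\<forall>j<i. xs ! j \<noteq> b))) \<and>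
   (\<forall>f. ipath V E f \<and> f 0 = x \<longrightarrow> (\<exists>i. f i = a \<and> (\<forall>j<i. f j \<noteq> b)))
   \<longleftrightarrow> (\<forall>f. run V E f \<and> f 0 = x \<longrightarrow> occurs_before f a b)"
  unfolding occurs_before_def[symmetric]
  by (rule all_runs_iff[where P = "\<lambda>f. occurs_before f a b", symmetric])
    (simp add: occurs_before_padded maxfpath_not_Nil)

lemma occurs_before_shift_iff:
  assumes "\<And>j. j < t \<Longrightarrow> f j \<noteq> a \<and> f j \<noteq> b"
  shows "occurs_before (\<lambda>i. f (i + t)) a b \<longleftrightarrow> occurs_before f a b"
  unfolding occurs_before_def
proof
  assume "\<exists>i. f (i + t) = a \<and> (\<forall>j<i. f (j + t) \<noteq> b)"
  then obtain i where i: "f (i + t) = a" "\<forall>j<i. f (j + t) \<noteq> b" by blast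
  have "f j \<noteq> b" if "j < i + t" for j
  proof (cases "j < t")
    case False
    then have "j - t < i" "j = (j - t) + t" using that by auto
    then show ?thesis using i(2) by metis
  qed (use assms in blast)
  then show "\<exists>i. f i = a \<and> (\<forall>j<i. f j \<noteq> b)" using i(1) by blast
next
  assume "\<exists>i. f i = a \<and> (\<forall>j<i. f j \<noteq> b)"
  then obtain i where i: "f i = a" "\<forall>j<i. f j \<noteq> b" by blast
  then have "t \<le> i" using assms by (metis not_le)
  then show "\<exists>i. f (i + t) = a \<and> (\<forall>j<i. f (j + t) \<noteq> b)"
    using i by (intro exI[of _ "i - t"]) auto
qed

lemma DOD_iff_runs:
  "DOD V E p s1 s2 a b \<longleftrightarrow> distinct [p, a, b] \<and> on_all_max_paths V E p a \<and> on_all_max_paths V E p b \<and>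
     (\<forall>f. run V E f \<and> f 0 = s1 \<longrightarrow> occurs_before f a b) \<and>
     (\<forall>f. run V E f \<and> f 0 = s2 \<longrightarrow> occurs_before f b a)"
  unfolding DOD_def occurs_before_on_all_max_paths_iff_runs[symmetric] by (simp only: conj_assoc)

text \<open>The run following \<open>xs\<close> and then \<open>f\<close>, where the last node of \<open>xs\<close> is identified with \<open>f 0\<close>.\<close>

definition prepend :: "'a list \<Rightarrow> (nat \<Rightarrow> 'a) \<Rightarrow> nat \<Rightarrow> 'a" where
  "prepend xs f i = (if i < length xs - 1 then xs ! i else f (i - (length xs - 1)))"

lemma prepend_shift: "prepend xs f (i + (length xs - 1)) = f i"
  by (simp add: prepend_def)

lemma
  assumes "fpath V E xs" "last xs = f 0"
  shows prepend_0: "prepend xs f 0 = hd xs"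
    and range_prepend: "range (prepend xs f) = set xs \<union> range f"
proof -
  have ne: "xs \<noteq> []" using assms unfolding fpath_def by simp
  then have last: "xs ! (length xs - 1) = f 0" using assms(2) by (simp add: last_conv_nth)
  then show "prepend xs f 0 = hd xs"
    using ne by (auto simp: prepend_def hd_conv_nth)
  show "range (prepend xs f) = set xs \<union> range f"
  proof
    show "range (prepend xs f) \<subseteq> set xs \<union> range f"
      by (auto simp: prepend_def)
    have "set xs \<subseteq> range (prepend xs f)"
    proof
      fix x assume "x \<in> set xs"
      then obtain i where "i < length xs" "x = xs ! i" by (auto simp: in_set_conv_nth)
      moreover have "i < length xs - 1 \<or> i = length xs - 1"
        using \<open>i < length xs\<close> by arith
      ultimately have "prepend xs f i = x"
        using last by (auto simp: prepend_def)
      then show "x \<in> range (prepend xs f)" by (metis rangeI)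
    qed
    moreover have "range f \<subseteq> range (prepend xs f)"
      using prepend_shift by (metis image_subsetI rangeI)
    ultimately show "set xs \<union> range f \<subseteq> range (prepend xs f)" by blast
  qed
qed

lemma run_prepend:
  assumes "fpath V E xs" "run V E f" "last xs = f 0"
  shows "run V E (prepend xs f)"
  unfolding run_def
proof
  fix i
  have last: "xs ! (length xs - 1) = f 0"
    using assms unfolding fpath_def by (simp add: last_conv_nth)
  show "prepend xs f i \<in> V \<and> ((prepend xs f i, prepend xs f (Suc i)) \<in> E \<or>
      (E `` {prepend xs f i} = {} \<and> prepend xs f (Suc i) = prepend xs f i))"
  proof (cases "i < length xs - 1")
    case True
    then have "Suc i < length xs - 1 \<or> Suc i = length xs - 1" by arith
    then have "prepend xs f (Suc i) = xs ! Suc i"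
      using last by (auto simp: prepend_def)
    moreover have "prepend xs f i = xs ! i"
      using True by (simp add: prepend_def)
    moreover have "xs ! i \<in> V" "(xs ! i, xs ! Suc i) \<in> E"
      using True assms(1) unfolding fpath_def by auto
    ultimately show ?thesis by simp
  next
    case False
    then have "prepend xs f i = f (i - (length xs - 1))"
      "prepend xs f (Suc i) = f (Suc (i - (length xs - 1)))"
      by (auto simp: prepend_def Suc_diff_le)
    then show ?thesis using assms(2) unfolding run_def by simp
  qed
qed

definition cycle_run :: "'a list \<Rightarrow> nat \<Rightarrow> 'a" where
  "cycle_run c i = c ! (i mod (length c - 1))"

lemma
  assumes "fpath V E c" "length c \<ge> 2" "hd c = last c"
  shows run_cycle_run: "run V E (cycle_run c)"
    and cycle_run_0: "cycle_run c 0 = hd c"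
    and range_cycle_run: "range (cycle_run c) = set c"
proof -
  let ?m = "length c - 1"
  have m: "?m > 0" using assms by simp
  have "c \<noteq> []" using assms(2) by auto
  then have last: "c ! ?m = c ! 0"
    using assms(3) by (simp add: last_conv_nth hd_conv_nth)
  have wrap: "c ! (Suc i mod ?m) = c ! Suc (i mod ?m)" for i
    using last by (cases "Suc (i mod ?m) = ?m") (auto simp: mod_Suc)
  have lt: "Suc (i mod ?m) < length c" for i
  proof -
    have "i mod ?m < ?m" using m by simp
    then show ?thesis by linarith
  qed
  have "c ! (i mod ?m) \<in> V \<and> (c ! (i mod ?m), c ! Suc (i mod ?m)) \<in> E" for i
    using lt[of i] assms(1) unfolding fpath_def by auto
  then show "run V E (cycle_run c)"
    unfolding run_def cycle_run_def wrap by simp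
  show "cycle_run c 0 = hd c"
    using \<open>c \<noteq> []\<close> by (simp add: cycle_run_def hd_conv_nth)
  show "range (cycle_run c) = set c"
  proof
    show "range (cycle_run c) \<subseteq> set c"
      using lt by (auto simp: cycle_run_def intro: nth_mem Suc_lessD)
    show "set c \<subseteq> range (cycle_run c)"
    proof
      fix x assume "x \<in> set c"
      then obtain i where "i < length c" "x = c ! i" by (auto simp: in_set_conv_nth)
      moreover have "i < ?m \<or> i = ?m" using \<open>i < length c\<close> by arith
      ultimately have "cycle_run c (if i < ?m then i else 0) = x"
        using last by (auto simp: cycle_run_def)
      then show "x \<in> range (cycle_run c)" by (metis rangeI)
    qed
  qed
qed

section \<open>Intervals and cycles\<close>

lemma interval_fpath:
  assumes "interval V E V' x y"
  shows "\<exists>I. fpath V E I \<and> length I \<ge> 2 \<and> hd I = x \<and> last I = y \<and> set I \<subseteq> {x, y} \<union> (V - V')"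
proof -
  obtain I where I: "fpath V E I" "length I \<ge> 2" "hd I = x" "last I = y"
    "\<And>i. 0 < i \<Longrightarrow> i < length I - 1 \<Longrightarrow> I ! i \<notin> V'"
    using assms unfolding interval_def by blast
  have "I \<noteq> []" using I(2) by auto
  have "I ! i \<in> {x, y} \<union> (V - V')" if i: "i < length I" for i
  proof -
    consider "i = 0" | "i = length I - 1" | "0 < i" "i < length I - 1"
      using i by (cases "i = 0"; cases "i = length I - 1") auto
    then show ?thesis
      using I i fpath_nth_in_V[OF I(1) i] \<open>I \<noteq> []\<close> by cases (auto simp: hd_conv_nth last_conv_nth)
  qed
  then have "set I \<subseteq> {x, y} \<union> (V - V')"
    by (metis in_set_conv_nth subsetI)
  then show ?thesis using I by blast
qed

lemma run_first_return_interval: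
  assumes "run V E g" "g 0 \<in> S" "0 < t" "g t \<in> S" "\<And>j. 0 < j \<Longrightarrow> j < t \<Longrightarrow> g j \<notin> S"
    and "g k \<noteq> g 0"
  shows "interval V E S (g 0) (g t)"
proof -
  have "E `` {g j} \<noteq> {}" if "j < t" for j
  proof
    assume sink: "E `` {g j} = {}"
    show False
    proof (cases "j = 0")
      case True
      then show False using run_stays_at_sink[OF assms(1) sink, of k] assms(6) by simp
    next
      case False
      then show False using run_stays_at_sink[OF assms(1) sink, of t] that assms(4,5) by simp
    qed
  qed
  then have "fpath V E (map g [0..<Suc t])"
    by (rule run_prefix_fpath[OF assms(1)])
  moreover have "length (map g [0..<Suc t]) \<ge> 2" "hd (map g [0..<Suc t]) = g 0"
    using assms(3) by (simp_all add: upt_conv_Cons del: upt_Suc)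
  moreover have "last (map g [0..<Suc t]) = g t"
    by simp
  moreover have "\<forall>i. 0 < i \<and> i < length (map g [0..<Suc t]) - 1 \<longrightarrow> map g [0..<Suc t] ! i \<notin> S"
    using assms(5) by (simp del: upt_Suc)
  ultimately show ?thesis
    unfolding interval_def using assms(2,4) by blast
qed

lemma closed_path_through_interval:
  assumes "interval V E V' z u" "fpath V E (u # zs)" "last (u # zs) = z"
    and "u' \<in> V'" "u' \<noteq> u" "u' \<notin> set zs"
  shows "\<exists>c. fpath V E c \<and> length c \<ge> 2 \<and> hd c = z \<and> last c = z \<and> u' \<notin> set c"
proof -
  obtain I where I: "fpath V E I" "length I \<ge> 2" "hd I = z" "last I = u" "set I \<subseteq> {z, u} \<union> (V - V')"
    using interval_fpath[OF assms(1)] by blast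
  have c: "fpath V E (I @ zs)" "hd (I @ zs) = z" "last (I @ zs) = z" "set (I @ zs) = set I \<union> set (u # zs)"
    using fpath_join[OF I(1) assms(2)] I(3,4) assms(3) by auto
  have "u' \<noteq> z"
    using assms(3,5,6) by (cases "zs = []") (auto simp: last_in_set)
  then have "u' \<notin> set (I @ zs)"
    using c(4) I(5) assms(4-6) by auto
  then show ?thesis using c I(2) by (intro exI[of _ "I @ zs"]) simp
qed

lemma closed_path_avoiding_fork:
  assumes "interval V E V' z u1" "interval V E V' z u2" "u1 \<noteq> u2"
    and "fpath V E \<pi>" "hd \<pi> = u1" "last \<pi> = z"
  shows "\<exists>c. fpath V E c \<and> length c \<ge> 2 \<and> hd c = z \<and> last c = z \<and> (u1 \<notin> set c \<or> u2 \<notin> set c)"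
proof -
  have "u1 \<in> set \<pi>" using assms(4,5) unfolding fpath_def by auto
  then obtain ys u zs where split: "\<pi> = ys @ u # zs" "u \<in> {u1, u2}" "\<forall>x\<in>set zs. x \<notin> {u1, u2}"
    using split_list_last_prop[of \<pi> "\<lambda>x. x \<in> {u1, u2}"] by blast
  then have "fpath V E (u # zs)" "last (u # zs) = z"
    using fpath_drop[OF assms(4), of "length ys"] assms(6) by auto
  moreover have "u1 \<in> V'" "u2 \<in> V'"
    using assms(1,2) unfolding interval_def by auto
  ultimately consider
      "\<exists>c. fpath V E c \<and> length c \<ge> 2 \<and> hd c = z \<and> last c = z \<and> u2 \<notin> set c"
    | "\<exists>c. fpath V E c \<and> length c \<ge> 2 \<and> hd c = z \<and> last c = z \<and> u1 \<notin> set c"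
    using split(2,3) assms(1-3) closed_path_through_interval[of V E V' z] by blast
  then show ?thesis by cases blast+
qed

section \<open>The regular language\<close>

lemma mem_lconc: "w \<in> A \<cdot>\<cdot> B \<longleftrightarrow> (\<exists>xs ys. w = xs @ ys \<and> xs \<in> A \<and> ys \<in> B)"
  unfolding lconc_def by blast

lemma lconcI: "xs \<in> A \<Longrightarrow> ys \<in> B \<Longrightarrow> xs @ ys \<in> A \<cdot>\<cdot> B"
  unfolding lconc_def by blast

lemma mem_letters_lconc: "w \<in> letters A \<cdot>\<cdot> L \<longleftrightarrow> (\<exists>v ys. w = v # ys \<and> v \<in> A \<and> ys \<in> L)"
  unfolding lconc_def letters_def by (auto, metis append_Cons append_Nil)

lemma lconc_assoc: "A \<cdot>\<cdot> (B \<cdot>\<cdot> C) = (A \<cdot>\<cdot> B) \<cdot>\<cdot> C"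
  unfolding lconc_def by (auto, metis append_assoc, metis)

lemma lstar_letters: "lstar (letters U) = lists U"
proof (intro equalityI subsetI)
  fix xs assume "xs \<in> lstar (letters U)"
  then show "xs \<in> lists U"
    by (induction rule: lstar.induct) (auto simp: letters_def)
next
  fix xs assume "xs \<in> lists U"
  then show "xs \<in> lstar (letters U)"
  proof (induction xs)
    case (Cons x xs)
    then show ?case using lstar_app[of "[x]" "letters U" xs] by (simp add: letters_def)
  qed (simp add: lstar_Nil)
qed

lemma lists_lconc_lstar_blocks: "lists U \<cdot>\<cdot> lstar (letters B \<cdot>\<cdot> lists U) = lists (B \<union> U)"
proof (intro equalityI subsetI)
  have blocks: "ys \<in> lists (B \<union> U)" if "ys \<in> lstar (letters B \<cdot>\<cdot> lists U)" for ys
    using that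
  proof (induction rule: lstar.induct)
    case (lstar_app xs ys)
    then obtain v us where "xs = v # us" "v \<in> B" "us \<in> lists U"
      unfolding mem_letters_lconc by blast
    then show ?case using lstar_app.IH by auto
  qed simp
  fix xs assume "xs \<in> lists U \<cdot>\<cdot> lstar (letters B \<cdot>\<cdot> lists U)"
  then obtain us ys where "xs = us @ ys" "us \<in> lists U" "ys \<in> lstar (letters B \<cdot>\<cdot> lists U)"
    unfolding mem_lconc by blast
  then show "xs \<in> lists (B \<union> U)"
    using blocks by auto
next
  fix xs assume "xs \<in> lists (B \<union> U)"
  then show "xs \<in> lists U \<cdot>\<cdot> lstar (letters B \<cdot>\<cdot> lists U)"
  proof (induction xs)
    case Nil
    show ?case using lconcI[OF _ lstar_Nil, of "[]" "lists U"] by simp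
  next
    case (Cons x xs)
    then obtain us r where r: "xs = us @ r" "us \<in> lists U" "r \<in> lstar (letters B \<cdot>\<cdot> lists U)"
      unfolding mem_lconc by auto
    show ?case
    proof (cases "x \<in> U")
      case True
      then have "x # us \<in> lists U" using r(2) by simp
      from lconcI[OF this r(3)] show ?thesis using r(1) by simp
    next
      case False
      then have "x \<in> B" using Cons by simp
      then have "x # us \<in> letters B \<cdot>\<cdot> lists U"
        using r(2) unfolding mem_letters_lconc by simp
      from lstar_app[OF this r(3)] have "(x # us) @ r \<in> lstar (letters B \<cdot>\<cdot> lists U)" .
      from lconcI[OF _ this, of "[]"] show ?thesis using r(1) by simp
    qed
  qed
qed

lemma language_iff_decomposition:
  "w \<in> letters A \<cdot>\<cdot> lstar (letters U) \<cdot>\<cdot> lstar (letters B \<cdot>\<cdot> lstar (letters U))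
      \<cdot>\<cdot> letters B \<cdot>\<cdot> lstar (letters U) \<cdot>\<cdot> lstar (letters A \<cdot>\<cdot> lstar (letters U))
   \<longleftrightarrow> (\<exists>v zs b ys. w = v # zs @ b # ys \<and> v \<in> A \<and> set zs \<subseteq> B \<union> U \<and> b \<in> B \<and> set ys \<subseteq> A \<union> U)"
proof -
  have blocks: "lists U \<cdot>\<cdot> (lstar (letters X \<cdot>\<cdot> lists U) \<cdot>\<cdot> R) = lists (X \<union> U) \<cdot>\<cdot> R" for X R
    by (simp only: lconc_assoc lists_lconc_lstar_blocks)
  show ?thesis
    unfolding lstar_letters blocks lists_lconc_lstar_blocks mem_lconc
  proof
    assume "\<exists>xs ys. w = xs @ ys \<and> xs \<in> letters A \<and> (\<exists>zs r. ys = zs @ r \<and> zs \<in> lists (B \<union> U) \<and>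
      (\<exists>bs ys. r = bs @ ys \<and> bs \<in> letters B \<and> ys \<in> lists (A \<union> U)))"
    then show "\<exists>v zs b ys. w = v # zs @ b # ys \<and> v \<in> A \<and> set zs \<subseteq> B \<union> U \<and> b \<in> B \<and> set ys \<subseteq> A \<union> U"
      by (fastforce simp: letters_def)
  next
    assume "\<exists>v zs b ys. w = v # zs @ b # ys \<and> v \<in> A \<and> set zs \<subseteq> B \<union> U \<and> b \<in> B \<and> set ys \<subseteq> A \<union> U"
    then obtain v zs b ys where "w = [v] @ zs @ [b] @ ys" "v \<in> A" "set zs \<subseteq> B \<union> U" "b \<in> B" "set ys \<subseteq> A \<union> U"
      by auto
    then show "\<exists>xs ys. w = xs @ ys \<and> xs \<in> letters A \<and> (\<exists>zs r. ys = zs @ r \<and> zs \<in> lists (B \<union> U) \<and>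
      (\<exists>bs ys. r = bs @ ys \<and> bs \<in> letters B \<and> ys \<in> lists (A \<union> U)))"
      unfolding letters_def by blast
  qed
qed

lemma nth_decomposition_cases:
  assumes "j < length (v # zs @ b # ys)"
  obtains "j = 0" | "0 < j" "j \<le> length zs" "(v # zs @ b # ys) ! j \<in> set zs"
    | "j = Suc (length zs)" "(v # zs @ b # ys) ! j = b"
    | "Suc (length zs) < j" "(v # zs @ b # ys) ! j \<in> set ys"
proof -
  consider "j = 0" | "0 < j" "j \<le> length zs" | "j = Suc (length zs)" | "Suc (length zs) < j"
    by linarith
  then show ?thesis
  proof cases
    case 2
    then have "(v # zs @ b # ys) ! j = zs ! (j - 1)"
      by (cases j) (auto simp: nth_append)
    then show ?thesis using that(2) 2 by simp
  next
    case 4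
    then have "(v # zs @ b # ys) ! j = ys ! (j - Suc (Suc (length zs)))"
      by (auto simp: nth_append nth_Cons' split: if_splits)
    moreover have "j - Suc (Suc (length zs)) < length ys" using assms 4 by simp
    ultimately show ?thesis using that(4) 4 by simp
  qed (use that in \<open>auto simp: nth_append\<close>)
qed

lemma decomposition_position_first:
  assumes "j < length (v # zs @ b # ys)" "(v # zs @ b # ys) ! j \<in> A" "set zs \<inter> A = {}" "b \<notin> A"
  shows "j = 0 \<or> Suc (length zs) < j"
  using assms(1) by (cases rule: nth_decomposition_cases) (use assms(2-4) in auto)

lemma decomposition_position_second:
  assumes "j < length (v # zs @ b # ys)" "(v # zs @ b # ys) ! j \<in> B" "v \<notin> B" "set ys \<inter> B = {}"
  shows "0 < j \<and> j \<le> Suc (length zs)"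
  using assms(1) by (cases rule: nth_decomposition_cases) (use assms(2-4) in auto)

lemma decomposition_if_no_A_before_B:
  assumes "set rest \<subseteq> A \<union> B \<union> U" "set rest \<inter> B \<noteq> {}"
    and "\<And>i j. i < j \<Longrightarrow> j < length rest \<Longrightarrow> rest ! i \<in> A \<Longrightarrow> rest ! j \<notin> B"
  shows "\<exists>zs b ys. rest = zs @ b # ys \<and> set zs \<subseteq> B \<union> U \<and> b \<in> B \<and> set ys \<subseteq> A \<union> U"
proof -
  obtain zs b ys where split: "rest = zs @ b # ys" "b \<in> B" "\<forall>y\<in>set ys. y \<notin> B"
    using split_list_last_prop[of rest "\<lambda>y. y \<in> B"] assms(2) by blast
  have "zs ! i \<notin> A" if "i < length zs" for i
    using assms(3)[of i "length zs"] that split by (auto simp: nth_append)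
  then have "set zs \<inter> A = {}" by (auto simp: in_set_conv_nth)
  then have "set zs \<subseteq> B \<union> U" "set ys \<subseteq> A \<union> U"
    using assms(1) split by auto
  then show ?thesis using split(1,2) by blast
qed

section \<open>The cycle of \<open>A\<^sub>p\<close>\<close>

locale predicate_node =
  fixes V :: "'a set" and E :: "('a \<times> 'a) set" and p s1 s2 :: 'a
  assumes cfg: "cfg V E" and p_in_V: "p \<in> V" and successors_p: "E `` {p} = {s1, s2}"
    and Ap_branches_at_p: "card (Ap_edges V E p `` {p}) \<ge> 2"
begin

abbreviation W :: "'a set" where "W \<equiv> Vp V E p"
abbreviation C :: "'a set" where "C \<equiv> Vp V E p - {p}"
abbreviation V1 :: "'a set" where "V1 \<equiv> Vsucc V E p s1"
abbreviation V2 :: "'a set" where "V2 \<equiv> Vsucc V E p s2"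
abbreviation entries :: "'a set" where "entries \<equiv> V1 \<union> V2"
abbreviation U :: "'a set" where "U \<equiv> W - (V1 \<union> V2)"

lemma E_subset: "E \<subseteq> V \<times> V"
  using cfg unfolding cfg_def by simp

lemma finite_W: "finite W"
  using cfg unfolding cfg_def Vp_def by simp

lemma W_subset_V: "W \<subseteq> V"
  unfolding Vp_def by auto

lemma run_from_p_covers_W:
  assumes "x \<in> W" "run V E f" "f 0 = p"
  shows "x \<in> range f"
proof -
  have "on_all_max_paths V E p x" using assms(1) by (simp add: Vp_def)
  then show ?thesis using assms(2,3) unfolding on_all_max_paths_iff_runs by blast
qed

lemma p_in_W: "p \<in> W"
proof -
  have "on_all_max_paths V E p p"
    unfolding on_all_max_paths_iff_runs by (metis rangeI)
  then show ?thesis using p_in_V by (simp add: Vp_def)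
qed

lemma on_all_max_paths_from_p_iff: "on_all_max_paths V E p x \<longleftrightarrow> x \<in> W"
proof
  assume "on_all_max_paths V E p x"
  moreover obtain f where "run V E f" "f 0 = p"
    using run_exists[OF E_subset p_in_V] by blast
  ultimately show "x \<in> W"
    unfolding Vp_def on_all_max_paths_iff_runs using run_in_V by blast
qed (simp add: Vp_def)

lemma Vsucc_subset_W: "Vsucc V E p s \<subseteq> W"
  unfolding Vsucc_def by auto

lemma Ap_successors_of_p_subset_entries: "Ap_edges V E p `` {p} \<subseteq> entries"
proof
  fix y assume "y \<in> Ap_edges V E p `` {p}"
  then have "y \<in> W" and "interval V E W p y" unfolding Ap_edges_def by auto
  then obtain xs where xs: "fpath V E xs" "length xs \<ge> 2" "hd xs = p" "last xs = y"
    "\<And>i. 0 < i \<Longrightarrow> i < length xs - 1 \<Longrightarrow> xs ! i \<notin> W"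
    unfolding interval_def by blast
  have "xs \<noteq> []" using xs(2) by auto
  then have "(p, xs ! 1) \<in> E"
    using xs(1-3) unfolding fpath_def by (auto simp: hd_conv_nth)
  then have s: "xs ! 1 \<in> {s1, s2}" using successors_p by auto
  have "fpath V E (drop 1 xs)" "hd (drop 1 xs) = xs ! 1" "last (drop 1 xs) = y"
    using fpath_drop[OF xs(1), of 1] xs(2,4) by (auto simp: hd_drop_conv_nth)
  moreover have "drop 1 xs ! i \<notin> W" if "i < length (drop 1 xs) - 1" for i
    using xs(5)[of "Suc i"] that by simp
  ultimately have "y \<in> Vsucc V E p (xs ! 1)"
    unfolding Vsucc_def using \<open>y \<in> W\<close> by blast
  then show "y \<in> entries" using s by blast
qed

lemma two_entries: "\<exists>e1 e2. e1 \<in> entries \<and> e2 \<in> entries \<and> e1 \<noteq> e2"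
proof -
  have "entries \<subseteq> W"
    using Vsucc_subset_W by blast
  then have "finite entries"
    by (rule finite_subset[OF _ finite_W])
  moreover have "\<not> card entries \<le> Suc 0"
    using Ap_branches_at_p card_mono[OF \<open>finite entries\<close> Ap_successors_of_p_subset_entries] by simp
  ultimately have "\<not> (\<forall>a\<in>entries. \<forall>b\<in>entries. a = b)"
    by (simp add: card_le_Suc0_iff_eq)
  then show ?thesis by blast
qed

lemma entry_interval:
  assumes "e \<in> entries"
  shows "interval V E W p e"
proof -
  obtain s xs where s: "s \<in> {s1, s2}" and e: "e \<in> W"
    and xs: "fpath V E xs" "hd xs = s" "last xs = e" "\<And>i. i < length xs - 1 \<Longrightarrow> xs ! i \<notin> W"
    using assms unfolding Vsucc_def by blast
  have "xs \<noteq> []" using xs(1) unfolding fpath_def by simp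
  have "fpath V E (p # xs)"
    using xs(1,2) s successors_p p_in_V unfolding fpath_conv_successively
    by (auto simp: successively_Cons)
  moreover have "\<forall>i. 0 < i \<and> i < length (p # xs) - 1 \<longrightarrow> (p # xs) ! i \<notin> W"
    using xs(4) by (auto simp: nth_Cons')
  moreover have "length (p # xs) \<ge> 2" "hd (p # xs) = p" "last (p # xs) = e"
    using xs(3) \<open>xs \<noteq> []\<close> by (auto simp: Suc_le_eq)
  ultimately show ?thesis
    unfolding interval_def using p_in_W e by blast
qed

lemma p_notin_entries: "p \<notin> entries"
proof
  assume "p \<in> entries"
  then obtain c where c: "fpath V E c" "length c \<ge> 2" "hd c = p" "last c = p" "set c \<subseteq> {p} \<union> (V - W)"
    using interval_fpath[OF entry_interval] by fastforce
  obtain e1 e2 where e: "e1 \<in> entries" "e2 \<in> entries" "e1 \<noteq> e2"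
    using two_entries by blast
  have "hd c = last c" using c(3,4) by simp
  then have r: "run V E (cycle_run c)" "cycle_run c 0 = p" "range (cycle_run c) = set c"
    using c(1-3) by (simp_all add: run_cycle_run cycle_run_0 range_cycle_run)
  have "e = p" if "e \<in> entries" for e
  proof -
    have "e \<in> W" using that Vsucc_subset_W by blast
    then show ?thesis using run_from_p_covers_W[OF _ r(1,2)] r(3) c(5) by blast
  qed
  then show False
    using e by blast
qed

lemma entries_subset_C: "entries \<subseteq> C"
  using p_notin_entries Vsucc_subset_W by blast

lemma run_from_successor_enters:
  assumes "s \<in> {s1, s2}" "run V E f" "f 0 = s"
  shows "\<exists>t. f t \<in> Vsucc V E p s \<and> (\<forall>j<t. f j \<notin> W)"
proof -
  have ps: "fpath V E [p, s]"
    using assms(1) successors_p p_in_V E_subset unfolding fpath_def by (auto simp: less_Suc_eq)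
  have ls: "last [p, s] = f 0" using assms(3) by simp
  have g: "run V E (prepend [p, s] f)" "prepend [p, s] f 0 = p"
    "range (prepend [p, s] f) = {p, s} \<union> range f"
    using run_prepend[OF ps assms(2) ls] prepend_0[where f = f, OF ps ls]
      range_prepend[where f = f, OF ps ls] by simp_all
  obtain e where "e \<in> entries" "e \<noteq> p"
    using two_entries by blast
  then have "e \<in> W" "e \<in> {p, s} \<union> range f"
    using Vsucc_subset_W run_from_p_covers_W[OF _ g(1,2)] g(3) by blast+
  then have "\<exists>t. f t \<in> W"
    using \<open>e \<noteq> p\<close> assms(3) by auto
  then obtain t where t: "f t \<in> W" "\<And>j. j < t \<Longrightarrow> f j \<notin> W"
    using exists_least_iff[of "\<lambda>t. f t \<in> W"] by blast
  then have "fpath V E (map f [0..<Suc t])"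
    by (intro run_prefix_fpath_first_visit[OF assms(2)]) metis
  moreover have "hd (map f [0..<Suc t]) = s"
    using assms(3) by (simp add: upt_conv_Cons del: upt_Suc)
  moreover have "last (map f [0..<Suc t]) = f t"
    by simp
  moreover have "\<forall>i<length (map f [0..<Suc t]) - 1. map f [0..<Suc t] ! i \<notin> W"
    using t(2) by (simp del: upt_Suc)
  ultimately have "f t \<in> Vsucc V E p s"
    unfolding Vsucc_def using t(1) by blast
  then show ?thesis using t(2) by blast
qed

lemma run_from_entry_covers_C:
  assumes "e \<in> entries" "run V E f" "f 0 = e"
  shows "C \<subseteq> range f"
proof
  fix y assume y: "y \<in> C"
  obtain \<rho> where \<rho>: "fpath V E \<rho>" "hd \<rho> = p" "last \<rho> = e" "set \<rho> \<subseteq> {p, e} \<union> (V - W)"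
    using interval_fpath[OF entry_interval[OF assms(1)]] by blast
  have "run V E (prepend \<rho> f)" "prepend \<rho> f 0 = p"
    using run_prepend[OF \<rho>(1) assms(2)] prepend_0[OF \<rho>(1)] \<rho>(2,3) assms(3) by simp_all
  then have "y \<in> range (prepend \<rho> f)"
    using run_from_p_covers_W y by blast
  moreover have "range (prepend \<rho> f) = set \<rho> \<union> range f"
    using range_prepend[OF \<rho>(1)] \<rho>(3) assms(3) by simp
  ultimately have "y \<in> set \<rho> \<or> y \<in> range f" by blast
  then show "y \<in> range f"
    using \<rho>(4) y assms(3) by (auto intro: range_eqI[of _ _ 0])
qed

lemma run_from_entry_revisits_entries:
  assumes "e \<in> entries" "run V E f" "f 0 = e"
  shows "\<exists>t\<ge>n. f t \<in> entries"
proof (induction n)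
  case 0
  show ?case using assms(1,3) by (metis le0)
next
  case (Suc n)
  then obtain t where t: "t \<ge> n" "f t \<in> entries" by blast
  obtain e' where e': "e' \<in> entries" "e' \<noteq> f t"
    using two_entries by metis
  have "C \<subseteq> range (\<lambda>i. f (i + t))"
    using run_from_entry_covers_C[OF t(2) run_shift[OF assms(2), of t]] by simp
  then have "e' \<in> range (\<lambda>i. f (i + t))"
    using e'(1) entries_subset_C by blast
  then obtain i where i: "f (i + t) = e'" by blast
  have "i \<noteq> 0" using i e'(2) by (metis add_0)
  then have "Suc n \<le> i + t" using t(1) by linarith
  then show ?case using i e'(1) by blast
qed

lemma run_from_C_covers_C:
  assumes "x \<in> C" "run V E f" "f 0 = x"
  shows "C \<subseteq> range f"
proof -
  obtain e where e: "e \<in> entries"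
    using two_entries by blast
  then have "e \<in> V"
    using Vsucc_subset_W W_subset_V by blast
  then obtain g where g: "run V E g" "g 0 = e"
    using run_exists[OF E_subset] by blast
  then have "x \<in> range g"
    using run_from_entry_covers_C[OF e] assms(1) by blast
  then obtain \<pi> where \<pi>: "fpath V E \<pi>" "hd \<pi> = e" "last \<pi> = x"
    using run_reaches_fpath[OF g(1)] g(2) by blast
  let ?n = "length \<pi> - 1"
  have "run V E (prepend \<pi> f)" "prepend \<pi> f 0 = e"
    using run_prepend[OF \<pi>(1) assms(2)] prepend_0[OF \<pi>(1)] \<pi>(2,3) assms(3) by simp_all
  then obtain t where "t \<ge> ?n" "prepend \<pi> f t \<in> entries"
    using run_from_entry_revisits_entries e by blast
  then have "f (t - ?n) \<in> entries"
    using prepend_shift[of \<pi> f "t - ?n"] by simp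
  from run_from_entry_covers_C[OF this run_shift[OF assms(2), of "t - ?n"]]
  show ?thesis by auto
qed

lemma run_from_W_covers_C:
  assumes "z \<in> W" "run V E f" "f 0 = z"
  shows "C \<subseteq> range f"
proof (cases "z = p")
  case True
  then show ?thesis using assms run_from_p_covers_W by blast
next
  case False
  then show ?thesis using assms run_from_C_covers_C by blast
qed

lemma fork_with_return_impossible:
  assumes "z \<in> W" "interval V E W z u1" "interval V E W z u2" "u1 \<in> C" "u2 \<in> C" "u1 \<noteq> u2"
    and "fpath V E \<pi>" "hd \<pi> = u1" "last \<pi> = z"
  shows False
proof -
  obtain c where c: "fpath V E c" "length c \<ge> 2" "hd c = z" "last c = z" "u1 \<notin> set c \<or> u2 \<notin> set c"
    using closed_path_avoiding_fork[OF assms(2,3,6-9)] by blast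
  then have "hd c = last c" by simp
  then have "run V E (cycle_run c)" "cycle_run c 0 = z" "range (cycle_run c) = set c"
    using c(1-3) by (simp_all add: run_cycle_run cycle_run_0 range_cycle_run)
  then have "C \<subseteq> set c"
    using run_from_W_covers_C[OF assms(1)] by blast
  then show False using c(5) assms(4,5) by blast
qed

lemma path_within_C:
  assumes "x \<in> C" "y \<in> C"
  shows "\<exists>\<pi>. fpath V E \<pi> \<and> hd \<pi> = x \<and> last \<pi> = y"
proof -
  have "x \<in> V" using assms(1) W_subset_V by blast
  then obtain f where f: "run V E f" "f 0 = x"
    using run_exists[OF E_subset] by blast
  then have "y \<in> range f"
    using run_from_C_covers_C[OF assms(1) f] assms(2) by blast
  then show ?thesis
    using run_reaches_fpath[OF f(1)] f(2) by blast
qed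

lemma no_Ap_edge_to_p:
  assumes "x \<in> C"
  shows "(x, p) \<notin> Ap_edges V E p"
proof
  assume "(x, p) \<in> Ap_edges V E p"
  then have "interval V E W x p" by (simp add: Ap_edges_def)
  then obtain I where I: "fpath V E I" "hd I = x" "last I = p"
    by (blast dest: interval_fpath)
  obtain e1 e2 where e: "e1 \<in> entries" "e2 \<in> entries" "e1 \<noteq> e2"
    using two_entries by blast
  have e_C: "e1 \<in> C" "e2 \<in> C"
    using e(1,2) entries_subset_C by blast+
  then obtain \<pi> where \<pi>: "fpath V E \<pi>" "hd \<pi> = e1" "last \<pi> = x"
    using path_within_C[OF _ assms] by blast
  have "fpath V E (\<pi> @ tl I)" "hd (\<pi> @ tl I) = e1" "last (\<pi> @ tl I) = p"
    using fpath_join[OF \<pi>(1) I(1)] \<pi>(2,3) I(2,3) by simp_all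
  then show False
    using fork_with_return_impossible[OF p_in_W entry_interval[OF e(1)] entry_interval[OF e(2)] e_C e(3)] by blast
qed

lemma Ap_edge_from_C_unique:
  assumes "x \<in> C" "(x, y1) \<in> Ap_edges V E p" "(x, y2) \<in> Ap_edges V E p"
  shows "y1 = y2"
proof (rule ccontr)
  assume "y1 \<noteq> y2"
  have "y1 \<in> C" "y2 \<in> C"
    using assms no_Ap_edge_to_p unfolding Ap_edges_def by auto
  then obtain \<pi> where "fpath V E \<pi>" "hd \<pi> = y1" "last \<pi> = x"
    using path_within_C[OF _ assms(1)] by blast
  moreover have "interval V E W x y1" "interval V E W x y2"
    using assms(2,3) unfolding Ap_edges_def by auto
  ultimately show False
    using fork_with_return_impossible[OF _ _ _ \<open>y1 \<in> C\<close> \<open>y2 \<in> C\<close> \<open>y1 \<noteq> y2\<close>] assms(1) by blast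
qed

lemma run_reaches_Ap_successor:
  assumes "x \<in> C" "run V E g" "g 0 = x"
  shows "\<exists>t>0. (x, g t) \<in> Ap_edges V E p \<and> (\<forall>j. 0 < j \<and> j < t \<longrightarrow> g j \<notin> W)"
proof -
  obtain e1 e2 where "e1 \<in> entries" "e2 \<in> entries" "e1 \<noteq> e2"
    using two_entries by blast
  then obtain c where c: "c \<in> C" "c \<noteq> x"
    using entries_subset_C by blast
  then obtain k where k: "g k = c"
    using run_from_C_covers_C[OF assms] by blast
  then have "0 < k \<and> g k \<in> W" using c assms(3) by (cases k) auto
  define t where "t = (LEAST t. 0 < t \<and> g t \<in> W)"
  have t: "0 < t" "g t \<in> W"
    using LeastI[of "\<lambda>t. 0 < t \<and> g t \<in> W", OF \<open>0 < k \<and> g k \<in> W\<close>] unfolding t_def by blast+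
  have before: "g j \<notin> W" if "0 < j" "j < t" for j
    using not_less_Least[of j "\<lambda>t. 0 < t \<and> g t \<in> W"] that unfolding t_def by blast
  have "interval V E W x (g t)"
    using run_first_return_interval[OF assms(2) _ t before, of k] assms(1,3) k c(2) by simp
  then have "(x, g t) \<in> Ap_edges V E p"
    using assms(1) t(2) by (simp add: Ap_edges_def)
  then show ?thesis
    using t(1) before by blast
qed

definition succ_C :: "'a \<Rightarrow> 'a" where
  "succ_C x = (THE y. (x, y) \<in> Ap_edges V E p)"

lemma succ_C:
  assumes "x \<in> C"
  shows "(x, succ_C x) \<in> Ap_edges V E p" "succ_C x \<in> C"
proof -
  have "x \<in> V" using assms W_subset_V by blast
  then obtain g where "run V E g" "g 0 = x"
    using run_exists[OF E_subset] by blast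
  then have "\<exists>y. (x, y) \<in> Ap_edges V E p"
    using run_reaches_Ap_successor[OF assms] by blast
  then have "\<exists>!y. (x, y) \<in> Ap_edges V E p"
    using Ap_edge_from_C_unique[OF assms] by blast
  then show edge: "(x, succ_C x) \<in> Ap_edges V E p"
    unfolding succ_C_def by (rule theI')
  then show "succ_C x \<in> C"
    using no_Ap_edge_to_p[OF assms] unfolding Ap_edges_def by auto
qed

lemma succ_C_unique: "x \<in> C \<Longrightarrow> (x, y) \<in> Ap_edges V E p \<Longrightarrow> y = succ_C x"
  using Ap_edge_from_C_unique[OF _ _ succ_C(1)] by blast

lemma funpow_succ_C_in_C:
  assumes "x \<in> C"
  shows "(succ_C ^^ k) x \<in> C"
proof (induction k)
  case (Suc k)
  then show ?case using succ_C(2)[of "(succ_C ^^ k) x"] by simp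
qed (use assms in simp)

lemma run_next_W_visit:
  assumes "x \<in> C" "run V E g" "g 0 = x"
  shows "\<exists>t>0. g t = succ_C x \<and> (\<forall>j. 0 < j \<and> j < t \<longrightarrow> g j \<notin> W)"
  using run_reaches_Ap_successor[OF assms] succ_C_unique[OF assms(1)] by blast

lemma run_visits_orbit_in_order:
  assumes "x \<in> C" "run V E f" "f 0 = x"
  shows "\<exists>i\<ge>k. f i = (succ_C ^^ k) x \<and> f ` {..<i} \<inter> W = (\<lambda>m. (succ_C ^^ m) x) ` {..<k}"
proof (induction k)
  case 0
  show ?case using assms(3) by (intro exI[of _ 0]) simp
next
  case (Suc k)
  then obtain i where i: "k \<le> i" "f i = (succ_C ^^ k) x" "f ` {..<i} \<inter> W = (\<lambda>m. (succ_C ^^ m) x) ` {..<k}"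
    by blast
  obtain t where t: "0 < t" "f (t + i) = succ_C ((succ_C ^^ k) x)"
    and between: "\<And>j. 0 < j \<Longrightarrow> j < t \<Longrightarrow> f (j + i) \<notin> W"
    using run_next_W_visit[OF funpow_succ_C_in_C[OF assms(1), of k] run_shift[OF assms(2), of i]] i(2) by auto
  have "{..<i + t} = {..<i} \<union> {i} \<union> {i<..<i + t}" using t(1) by auto
  moreover have "f j \<notin> W" if "j \<in> {i<..<i + t}" for j
  proof -
    have "0 < j - i" "j - i < t" "j = (j - i) + i" using that by auto
    then show ?thesis using between by metis
  qed
  then have "f ` {i<..<i + t} \<inter> W = {}" by blast
  moreover have "f i \<in> W"
    using i(2) funpow_succ_C_in_C[OF assms(1)] by simp
  ultimately have "f ` {..<i + t} \<inter> W = (\<lambda>m. (succ_C ^^ m) x) ` {..<Suc k}"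
    using i(2,3) by (auto simp: lessThan_Suc)
  moreover have "f (i + t) = (succ_C ^^ Suc k) x"
    using t(2) by (simp add: add.commute)
  ultimately show ?case
    using i(1) t(1) by (intro exI[of _ "i + t"]) auto
qed

lemma succ_C_reaches:
  assumes "x \<in> C" "y \<in> C"
  shows "\<exists>k. (succ_C ^^ k) x = y"
proof -
  have "x \<in> V" using assms(1) W_subset_V by blast
  then obtain f where f: "run V E f" "f 0 = x"
    using run_exists[OF E_subset] by blast
  then obtain i where "f i = y"
    using run_from_C_covers_C[OF assms(1) f] assms(2) by blast
  moreover obtain i' where "Suc i \<le> i'" "f ` {..<i'} \<inter> W = (\<lambda>m. (succ_C ^^ m) x) ` {..<Suc i}"
    using run_visits_orbit_in_order[OF assms(1) f] by blast
  ultimately have "y \<in> (\<lambda>m. (succ_C ^^ m) x) ` {..<Suc i}"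
    using assms(2) by force
  then show ?thesis by blast
qed

lemma orbit_succ_C:
  assumes "x \<in> C"
  shows "orbit succ_C x = C"
proof
  show "orbit succ_C x \<subseteq> C"
    using funpow_succ_C_in_C[OF assms] by (auto simp: orbit_altdef)
  show "C \<subseteq> orbit succ_C x"
  proof
    fix y assume "y \<in> C"
    then obtain k where "(succ_C ^^ k) (succ_C x) = y"
      using succ_C_reaches succ_C(2)[OF assms] by blast
    then have "(succ_C ^^ Suc k) x = y"
      by (simp add: funpow_swap1)
    then show "y \<in> orbit succ_C x"
      unfolding orbit_altdef by blast
  qed
qed

lemma
  assumes "x \<in> C"
  shows bij_betw_funpow_succ_C: "bij_betw (\<lambda>k. (succ_C ^^ k) x) {..<card C} C"
    and funpow_card_succ_C: "(succ_C ^^ card C) x = x"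
proof -
  have self: "x \<in> orbit succ_C x"
    using orbit_succ_C assms by simp
  have image: "C = (\<lambda>k. (succ_C ^^ k) x) ` {0..<funpow_dist1 succ_C x x}"
    using orbit_conv_funpow_dist1[OF self] orbit_succ_C[OF assms] by simp
  have inj: "inj_on (\<lambda>k. (succ_C ^^ k) x) {0..<funpow_dist1 succ_C x x}"
    by (rule inj_on_funpow_dist1[OF self])
  then have period: "funpow_dist1 succ_C x x = card C"
    using image card_image by fastforce
  show "bij_betw (\<lambda>k. (succ_C ^^ k) x) {..<card C} C"
    unfolding bij_betw_def using image inj period by (simp add: atLeast0LessThan)
  show "(succ_C ^^ card C) x = x"
    using funpow_dist1_prop[OF self] period by simp
qed

lemma funpow_succ_C_inj:
  assumes "x \<in> C" "m < card C" "k < card C" "(succ_C ^^ m) x = (succ_C ^^ k) x"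
  shows "m = k"
  using inj_onD[OF bij_betw_imp_inj_on[OF bij_betw_funpow_succ_C[OF assms(1)]] assms(4)] assms(2,3)
  by simp

lemma funpow_dist_funpow_succ_C:
  assumes "x \<in> C" "k < card C"
  shows "funpow_dist succ_C x ((succ_C ^^ k) x) = k"
  unfolding funpow_dist_def
proof (rule Least_equality)
  fix m assume eq: "(succ_C ^^ m) x = (succ_C ^^ k) x"
  show "k \<le> m"
  proof (rule ccontr)
    assume "\<not> k \<le> m"
    then have "m < card C" using assms(2) by simp
    then show False using funpow_succ_C_inj[OF assms(1) _ assms(2) eq] \<open>\<not> k \<le> m\<close> by simp
  qed
qed simp

lemma funpow_dist_succ_C:
  assumes "x \<in> C" "y \<in> C"
  shows "funpow_dist succ_C x y < card C" "(succ_C ^^ funpow_dist succ_C x y) x = y"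
proof -
  obtain k where "k < card C" "y = (succ_C ^^ k) x"
    using bij_betw_funpow_succ_C[OF assms(1)] assms(2) unfolding bij_betw_def by auto
  then show "funpow_dist succ_C x y < card C" "(succ_C ^^ funpow_dist succ_C x y) x = y"
    using funpow_dist_funpow_succ_C[OF assms(1)] by simp_all
qed

lemma funpow_dist_between_funpows:
  assumes "x \<in> C" "j < card C" "l < card C"
  shows "funpow_dist succ_C ((succ_C ^^ j) x) ((succ_C ^^ l) x) =
    (if j \<le> l then l - j else card C + l - j)"
proof -
  define k where "k = (if j \<le> l then l - j else card C + l - j)"
  have "(succ_C ^^ (k + j)) x = (succ_C ^^ l) x"
  proof (cases "j \<le> l")
    case False
    then have "k + j = l + card C" unfolding k_def using assms(2) by simp
    then show ?thesis using funpow_card_succ_C[OF assms(1)] by (simp add: funpow_add)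
  qed (simp add: k_def)
  moreover have "k < card C" unfolding k_def using assms(2,3) by auto
  ultimately show ?thesis
    using funpow_dist_funpow_succ_C[OF funpow_succ_C_in_C[OF assms(1)], of k j]
    unfolding k_def by (simp add: funpow_add)
qed

definition cycle_word :: "'a \<Rightarrow> 'a list" where
  "cycle_word x = map (\<lambda>k. (succ_C ^^ k) x) [0..<card C]"

lemma is_unfolding_cycle_word:
  assumes "x \<in> C"
  shows "is_unfolding V E p (cycle_word x)"
proof -
  have bij: "bij_betw (\<lambda>k. (succ_C ^^ k) x) {..<card C} C"
    by (rule bij_betw_funpow_succ_C[OF assms])
  have "card C > 0"
    using assms finite_W by (auto simp: card_gt_0_iff)
  moreover have "distinct (cycle_word x)" "set (cycle_word x) = C"
    using bij unfolding cycle_word_def bij_betw_def by (simp_all add: distinct_map atLeast0LessThan)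
  moreover have "\<forall>i. Suc i < length (cycle_word x) \<longrightarrow>
      (cycle_word x ! i, cycle_word x ! Suc i) \<in> Ap_edges V E p"
    using succ_C(1)[OF funpow_succ_C_in_C[OF assms]] unfolding cycle_word_def by simp
  ultimately show ?thesis
    unfolding is_unfolding_def by (simp add: cycle_word_def)
qed

lemma is_unfolding_eq_cycle_word:
  assumes "is_unfolding V E p w"
  shows "hd w \<in> C" "w = cycle_word (hd w)"
proof -
  have w: "w \<noteq> []" "distinct w" "set w = C"
    "\<And>i. Suc i < length w \<Longrightarrow> (w ! i, w ! Suc i) \<in> Ap_edges V E p"
    using assms unfolding is_unfolding_def by auto
  show "hd w \<in> C" using hd_in_set[OF w(1)] w(3) by simp
  have len: "length w = card C" using distinct_card[OF w(2)] w(3) by simp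
  have "w ! i = (succ_C ^^ i) (hd w)" if "i < length w" for i
    using that
  proof (induction i)
    case 0
    then show ?case using w(1) by (simp add: hd_conv_nth)
  next
    case (Suc i)
    then have "i < length w" by simp
    then have "w ! i \<in> C" using w(3) nth_mem by blast
    then have "w ! Suc i = succ_C (w ! i)"
      using succ_C_unique w(4)[OF Suc.prems] by blast
    then show ?case using Suc.IH \<open>i < length w\<close> by simp
  qed
  then show "w = cycle_word (hd w)"
    unfolding cycle_word_def using len by (intro nth_equalityI) simp_all
qed

lemma nth_cycle_word: "k < card C \<Longrightarrow> cycle_word x ! k = (succ_C ^^ k) x"
  by (simp add: cycle_word_def)

lemma length_cycle_word: "length (cycle_word x) = card C"
  by (simp add: cycle_word_def)

lemma cycle_word_Cons:
  assumes "x \<in> C"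
  obtains rest where "cycle_word x = x # rest"
proof -
  have "card C > 0"
    using assms finite_W by (auto simp: card_gt_0_iff)
  then show thesis
    using that unfolding cycle_word_def by (simp add: upt_conv_Cons del: upt_Suc)
qed

section \<open>Orders along runs\<close>

lemma orbit_prefix_iff_funpow_dist:
  assumes "v \<in> C" "y \<in> C" "k \<le> card C"
  shows "y \<in> (\<lambda>m. (succ_C ^^ m) v) ` {..<k} \<longleftrightarrow> funpow_dist succ_C v y < k"
proof
  assume "y \<in> (\<lambda>m. (succ_C ^^ m) v) ` {..<k}"
  then obtain m where "m < k" "y = (succ_C ^^ m) v" by blast
  then show "funpow_dist succ_C v y < k"
    using funpow_dist_funpow_succ_C[OF assms(1), of m] assms(3) by simp
next
  assume "funpow_dist succ_C v y < k"
  then show "y \<in> (\<lambda>m. (succ_C ^^ m) v) ` {..<k}"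
    using image_eqI[where f = "\<lambda>m. (succ_C ^^ m) v", OF funpow_dist_succ_C(2)[OF assms(1,2), symmetric]]
    by simp
qed

lemma run_first_visit_in_C:
  assumes "v \<in> C" "y \<in> C" "run V E f" "f 0 = v"
  obtains i where "f i = y" "\<And>z. z \<in> C \<Longrightarrow> z \<in> f ` {..<i} \<longleftrightarrow> funpow_dist succ_C v z < funpow_dist succ_C v y"
proof -
  let ?d = "funpow_dist succ_C v"
  obtain i where i: "f i = y" "f ` {..<i} \<inter> W = (\<lambda>m. (succ_C ^^ m) v) ` {..<?d y}"
    using run_visits_orbit_in_order[OF assms(1,3,4), of "?d y"] funpow_dist_succ_C(2)[OF assms(1,2)] by auto
  have "z \<in> f ` {..<i} \<longleftrightarrow> ?d z < ?d y" if "z \<in> C" for z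
  proof -
    have "z \<in> f ` {..<i} \<longleftrightarrow> z \<in> f ` {..<i} \<inter> W" using that by blast
    also have "\<dots> \<longleftrightarrow> z \<in> (\<lambda>m. (succ_C ^^ m) v) ` {..<?d y}" using i(2) by simp
    also have "\<dots> \<longleftrightarrow> ?d z < ?d y"
      using orbit_prefix_iff_funpow_dist[OF assms(1) that] funpow_dist_succ_C(1)[OF assms(1,2)] by simp
    finally show ?thesis .
  qed
  then show thesis using that i(1) by blast
qed

lemma occurs_before_iff_funpow_dist:
  assumes "v \<in> C" "a \<in> C" "b \<in> C" "a \<noteq> b" "run V E f" "f 0 = v"
  shows "occurs_before f a b \<longleftrightarrow> funpow_dist succ_C v a < funpow_dist succ_C v b"
proof -
  let ?d = "funpow_dist succ_C v"
  obtain i where i: "f i = a" "\<And>z. z \<in> C \<Longrightarrow> z \<in> f ` {..<i} \<longleftrightarrow> ?d z < ?d a"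
    using run_first_visit_in_C[OF assms(1,2,5,6)] by blast
  have "?d a \<noteq> ?d b"
    using funpow_dist_succ_C(2)[OF assms(1,2)] funpow_dist_succ_C(2)[OF assms(1,3)] assms(4) by metis
  show ?thesis
  proof
    assume "occurs_before f a b"
    then obtain i0 where i0: "f i0 = a" "\<forall>j<i0. f j \<noteq> b"
      unfolding occurs_before_def by blast
    show "?d a < ?d b"
    proof (rule ccontr)
      assume "\<not> ?d a < ?d b"
      then obtain j where j: "j < i" "f j = b"
        using i(2)[OF assms(3)] \<open>?d a \<noteq> ?d b\<close> by auto
      moreover have "i0 \<le> j" by (rule ccontr) (use i0(2) j(2) in auto)
      ultimately have "i0 < i" by simp
      then show False using i(2)[OF assms(2)] i0(1) by auto
    qed
  next
    assume "?d a < ?d b"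
    then have "b \<notin> f ` {..<i}" using i(2)[OF assms(3)] by simp
    then show "occurs_before f a b"
      unfolding occurs_before_def using i(1) by blast
  qed
qed

lemma occurs_before_after_Vsucc:
  assumes "v \<in> Vsucc V E p s" "a \<in> W" "b \<in> W" "\<forall>f. run V E f \<and> f 0 = s \<longrightarrow> occurs_before f a b"
    and "run V E \<sigma>" "\<sigma> 0 = v"
  shows "occurs_before \<sigma> a b"
proof -
  obtain xs where xs: "fpath V E xs" "hd xs = s" "last xs = v" "\<And>i. i < length xs - 1 \<Longrightarrow> xs ! i \<notin> W"
    using assms(1) unfolding Vsucc_def by blast
  have "run V E (prepend xs \<sigma>)" "prepend xs \<sigma> 0 = s"
    using run_prepend[OF xs(1) assms(5)] prepend_0[OF xs(1)] xs(2,3) assms(6) by simp_all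
  then have "occurs_before (prepend xs \<sigma>) a b" using assms(4) by blast
  moreover have "(\<lambda>i. prepend xs \<sigma> (i + (length xs - 1))) = \<sigma>"
    by (rule ext, rule prepend_shift)
  moreover have "prepend xs \<sigma> j \<noteq> a \<and> prepend xs \<sigma> j \<noteq> b" if "j < length xs - 1" for j
  proof -
    have "prepend xs \<sigma> j \<notin> W" using xs(4)[OF that] that by (simp add: prepend_def)
    then show ?thesis using assms(2,3) by blast
  qed
  ultimately show ?thesis
    using occurs_before_shift_iff[of "length xs - 1" "prepend xs \<sigma>" a b] by simp
qed

lemma occurs_before_from_successor_iff:
  assumes "s \<in> {s1, s2}" "a \<in> C" "b \<in> C" "a \<noteq> b"
  shows "(\<forall>f. run V E f \<and> f 0 = s \<longrightarrow> occurs_before f a b) \<longleftrightarrow>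
    (\<forall>v\<in>Vsucc V E p s. funpow_dist succ_C v a < funpow_dist succ_C v b)"
proof
  assume runs: "\<forall>f. run V E f \<and> f 0 = s \<longrightarrow> occurs_before f a b"
  show "\<forall>v\<in>Vsucc V E p s. funpow_dist succ_C v a < funpow_dist succ_C v b"
  proof
    fix v assume v: "v \<in> Vsucc V E p s"
    then have "v \<in> C" using assms(1) entries_subset_C by blast
    then obtain \<sigma> where \<sigma>: "run V E \<sigma>" "\<sigma> 0 = v"
      using run_exists[OF E_subset] W_subset_V by blast
    then have "occurs_before \<sigma> a b"
      using occurs_before_after_Vsucc[OF v _ _ runs] assms(2,3) by blast
    then show "funpow_dist succ_C v a < funpow_dist succ_C v b"
      using occurs_before_iff_funpow_dist[OF \<open>v \<in> C\<close> assms(2-4) \<sigma>] by simp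
  qed
next
  assume dists: "\<forall>v\<in>Vsucc V E p s. funpow_dist succ_C v a < funpow_dist succ_C v b"
  show "\<forall>f. run V E f \<and> f 0 = s \<longrightarrow> occurs_before f a b"
  proof (intro allI impI)
    fix f assume f: "run V E f \<and> f 0 = s"
    then obtain t where t: "f t \<in> Vsucc V E p s" "\<And>j. j < t \<Longrightarrow> f j \<notin> W"
      using run_from_successor_enters[OF assms(1)] by blast
    then have "f t \<in> C" using assms(1) entries_subset_C by blast
    then have "occurs_before (\<lambda>i. f (i + t)) a b"
      using occurs_before_iff_funpow_dist[OF _ assms(2-4) run_shift[of V E f t]] f t(1) dists by simp
    then show "occurs_before f a b"
      using occurs_before_shift_iff[of t f a b] t(2) assms(2,3) by blast
  qed
qed

lemma DOD_iff_funpow_dist: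
  "DOD V E p s1 s2 a b \<longleftrightarrow> a \<in> C \<and> b \<in> C \<and> a \<noteq> b \<and>
     (\<forall>v\<in>V1. funpow_dist succ_C v a < funpow_dist succ_C v b) \<and>
     (\<forall>v\<in>V2. funpow_dist succ_C v b < funpow_dist succ_C v a)"
proof -
  have "DOD V E p s1 s2 a b \<longleftrightarrow> a \<in> C \<and> b \<in> C \<and> a \<noteq> b \<and>
     (\<forall>f. run V E f \<and> f 0 = s1 \<longrightarrow> occurs_before f a b) \<and>
     (\<forall>f. run V E f \<and> f 0 = s2 \<longrightarrow> occurs_before f b a)"
    unfolding DOD_iff_runs on_all_max_paths_from_p_iff by auto
  also have "\<dots> \<longleftrightarrow> a \<in> C \<and> b \<in> C \<and> a \<noteq> b \<and>
     (\<forall>v\<in>V1. funpow_dist succ_C v a < funpow_dist succ_C v b) \<and>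
     (\<forall>v\<in>V2. funpow_dist succ_C v b < funpow_dist succ_C v a)"
  proof (cases "a \<in> C \<and> b \<in> C \<and> a \<noteq> b")
    case True
    then have "b \<noteq> a" by blast
    then show ?thesis
      using True occurs_before_from_successor_iff[of s1 a b] occurs_before_from_successor_iff[of s2 b a]
      by simp
  qed blast
  finally show ?thesis .
qed

section \<open>Unfoldings in the language\<close>

lemma Vsucc_nonempty:
  assumes "s \<in> {s1, s2}"
  shows "Vsucc V E p s \<noteq> {}"
proof -
  have "s \<in> V" using assms successors_p E_subset by blast
  then obtain f where "run V E f" "f 0 = s"
    using run_exists[OF E_subset] by blast
  then show ?thesis using run_from_successor_enters[OF assms] by blast
qed

lemma DOD_of_decomposition:
  assumes disjoint: "V1 \<inter> V2 = {}" and unf: "is_unfolding V E p (v # zs @ b # ys)"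
    and v: "v \<in> V1" and zs: "set zs \<subseteq> V2 \<union> U" and b: "b \<in> V2" and ys: "set ys \<subseteq> V1 \<union> U"
  shows "DOD V E p s1 s2 v b"
proof -
  let ?w = "v # zs @ b # ys" and ?m = "Suc (length zs)" and ?n = "card C"
  have "v \<in> C" and w: "?w = cycle_word v"
    using is_unfolding_eq_cycle_word[OF unf] by simp_all
  then have len: "length ?w = ?n" by (simp add: length_cycle_word)
  then have m: "?m < ?n" by simp
  have nth: "?w ! j = (succ_C ^^ j) v" if "j < ?n" for j
    using that w nth_cycle_word by metis
  have b_eq: "b = (succ_C ^^ ?m) v" using nth[OF m] by (simp add: nth_append)
  have dist: "funpow_dist succ_C (?w ! j) v = (if j = 0 then 0 else ?n - j)"
    "funpow_dist succ_C (?w ! j) b = (if j \<le> ?m then ?m - j else ?n + ?m - j)" if "j < ?n" for j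
    using funpow_dist_between_funpows[OF \<open>v \<in> C\<close> that, of 0]
      funpow_dist_between_funpows[OF \<open>v \<in> C\<close> that m] that nth[OF that] b_eq by auto
  have position: "\<exists>j<?n. u = ?w ! j" if "u \<in> C" for u
    using that unf len unfolding is_unfolding_def by (metis in_set_conv_nth)
  have "funpow_dist succ_C u v < funpow_dist succ_C u b" if u: "u \<in> V1" for u
  proof -
    obtain j where j: "j < ?n" "u = ?w ! j"
      using position u entries_subset_C by blast
    have "j = 0 \<or> ?m < j"
      using decomposition_position_first[of j v zs b ys V1] j len u zs b disjoint by auto
    then show ?thesis using dist[OF j(1)] j m by auto
  qed
  moreover have "funpow_dist succ_C u b < funpow_dist succ_C u v" if u: "u \<in> V2" for u
  proof -
    obtain j where j: "j < ?n" "u = ?w ! j"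
      using position u entries_subset_C by blast
    have "0 < j \<and> j \<le> ?m"
      using decomposition_position_second[of j v zs b ys V2] j len u v ys disjoint by auto
    then show ?thesis using dist[OF j(1)] j m by auto
  qed
  moreover have "b \<in> C" "v \<noteq> b"
    using b v disjoint entries_subset_C by auto
  ultimately show ?thesis
    unfolding DOD_iff_funpow_dist using \<open>v \<in> C\<close> by blast
qed

lemma V1_never_before_V2:
  assumes a: "a \<in> C" and b: "b \<in> C"
    and before1: "\<forall>v\<in>V1. funpow_dist succ_C v a < funpow_dist succ_C v b"
    and before2: "\<forall>v\<in>V2. funpow_dist succ_C v b < funpow_dist succ_C v a"
    and x: "x \<in> V1" "\<forall>y\<in>V1. funpow_dist succ_C x a \<le> funpow_dist succ_C y a"
    and JK: "0 < J" "J < K" "K < card C"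
    and "(succ_C ^^ J) x \<in> V1" "(succ_C ^^ K) x \<in> V2"
  shows False
proof -
  let ?n = "card C" and ?d = "funpow_dist succ_C"
  have "x \<in> C" using x(1) entries_subset_C by blast
  define la lb where "la = ?d x a" and "lb = ?d x b"
  have l: "la < ?n" "(succ_C ^^ la) x = a" "lb < ?n" "(succ_C ^^ lb) x = b"
    using funpow_dist_succ_C[OF \<open>x \<in> C\<close>] a b unfolding la_def lb_def by auto
  have "la < lb" using before1 x(1) unfolding la_def lb_def by blast
  have dist: "?d ((succ_C ^^ j) x) a = (if j \<le> la then la - j else ?n + la - j)"
    "?d ((succ_C ^^ j) x) b = (if j \<le> lb then lb - j else ?n + lb - j)" if "j < ?n" for j
    using funpow_dist_between_funpows[OF \<open>x \<in> C\<close> that] l by (metis (no_types))+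
  have "la \<le> ?d ((succ_C ^^ J) x) a"
    using x(2) \<open>(succ_C ^^ J) x \<in> V1\<close> unfolding la_def by blast
  then have "la < J" using dist(1)[of J] JK by (auto split: if_splits)
  moreover have "?d ((succ_C ^^ J) x) a < ?d ((succ_C ^^ J) x) b"
    using before1 \<open>(succ_C ^^ J) x \<in> V1\<close> by blast
  ultimately have "lb < J" using dist[of J] JK l(3) by (auto split: if_splits)
  moreover have "?d ((succ_C ^^ K) x) b < ?d ((succ_C ^^ K) x) a"
    using before2 \<open>(succ_C ^^ K) x \<in> V2\<close> by blast
  ultimately show False using dist[of K] JK \<open>la < lb\<close> by (auto split: if_splits)
qed

lemma decomposition_of_DOD:
  assumes disjoint: "V1 \<inter> V2 = {}" and "DOD V E p s1 s2 a b"
  shows "\<exists>w. is_unfolding V E p w \<and>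
    (\<exists>v zs b ys. w = v # zs @ b # ys \<and> v \<in> V1 \<and> set zs \<subseteq> V2 \<union> U \<and> b \<in> V2 \<and> set ys \<subseteq> V1 \<union> U)"
proof -
  have ab: "a \<in> C" "b \<in> C"
    and before1: "\<forall>v\<in>V1. funpow_dist succ_C v a < funpow_dist succ_C v b"
    and before2: "\<forall>v\<in>V2. funpow_dist succ_C v b < funpow_dist succ_C v a"
    using assms(2) unfolding DOD_iff_funpow_dist by blast+
  obtain x where x: "x \<in> V1" "\<forall>y\<in>V1. funpow_dist succ_C x a \<le> funpow_dist succ_C y a"
    using ex_has_least_nat[of "\<lambda>v. v \<in> V1" _ "\<lambda>v. funpow_dist succ_C v a"] Vsucc_nonempty[of s1] by blast
  then have "x \<in> C" using entries_subset_C by blast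
  define w where "w = cycle_word x"
  have unf: "is_unfolding V E p w"
    unfolding w_def by (rule is_unfolding_cycle_word[OF \<open>x \<in> C\<close>])
  have len: "length w = card C"
    unfolding w_def by (rule length_cycle_word)
  have nth: "\<And>j. j < card C \<Longrightarrow> w ! j = (succ_C ^^ j) x"
    unfolding w_def by (rule nth_cycle_word)
  have "set w = C"
    using unf unfolding is_unfolding_def by simp
  obtain rest where w: "w = x # rest"
    unfolding w_def using cycle_word_Cons[OF \<open>x \<in> C\<close>] by blast
  have "set rest \<subseteq> V1 \<union> V2 \<union> U"
    using \<open>set w = C\<close> w by auto
  moreover obtain u where "u \<in> V2" using Vsucc_nonempty[of s2] by blast
  then have "u \<in> set rest"
    using \<open>set w = C\<close> w x(1) disjoint entries_subset_C by auto
  then have "set rest \<inter> V2 \<noteq> {}" using \<open>u \<in> V2\<close> by blast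
  moreover have "rest ! j \<notin> V2" if "i < j" "j < length rest" "rest ! i \<in> V1" for i j
  proof
    assume "rest ! j \<in> V2"
    have "Suc j < card C" using that(2) len w by simp
    then show False
      using V1_never_before_V2[OF ab before1 before2 x, of "Suc i" "Suc j"] nth[of "Suc i"] nth[of "Suc j"]
        that \<open>rest ! j \<in> V2\<close> w by simp
  qed
  ultimately obtain zs b' ys where "rest = zs @ b' # ys" "set zs \<subseteq> V2 \<union> U" "b' \<in> V2" "set ys \<subseteq> V1 \<union> U"
    using decomposition_if_no_A_before_B[of rest V1 V2 U] by blast
  then show ?thesis
    using unf w x(1) by blast
qed

end

theorem theorem4p14:
  fixes V :: "'a set" and E :: "('a \<times> 'a) set" and p s1 s2 :: 'a
  assumes "cfg V E"
    and "p \<in> V"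
    and "E `` {p} = {s1, s2}" and "s1 \<noteq> s2"
    and "card (Ap_edges V E p `` {p}) \<ge> 2"
    and "Vsucc V E p s1 \<inter> Vsucc V E p s2 = {}"
  shows "(\<exists>a b. DOD V E p s1 s2 a b) \<longleftrightarrow>
    (\<exists>w. is_unfolding V E p w \<and>
       (let V1 = Vsucc V E p s1; V2 = Vsucc V E p s2; U = Vp V E p - (V1 \<union> V2) in
        w \<in> letters V1 \<cdot>\<cdot> lstar (letters U) \<cdot>\<cdot> lstar (letters V2 \<cdot>\<cdot> lstar (letters U))
             \<cdot>\<cdot> letters V2 \<cdot>\<cdot> lstar (letters U) \<cdot>\<cdot> lstar (letters V1 \<cdot>\<cdot> lstar (letters U))))"
proof -
  interpret predicate_node V E p s1 s2
    using assms(1-3,5) by unfold_locales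
  show ?thesis
    unfolding Let_def language_iff_decomposition
    using decomposition_of_DOD[OF assms(6)] DOD_of_decomposition[OF assms(6)] by blast
qed

end
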